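(* Let $m,n\in\mathbb{N}_0$, let $g\in\mathcal{H}(\mathbb{D})$, let $\mathcal{L}_j\in W_g(m-j,n+j)$ for $j=0,\dots,m$, and let $L_g$ be a $g$-operator satisfying \[L_g=L_0+\sum_{j=1}^mL_j\quad\text{on }\mathcal{H}_0(\mathbb{D}),\] where $L_0\in W_g(m,n)$ and $L_j\in\operatorname{span}W_g(m-j,n+j)$ for $j=1,\dots,m$. Then $L_g=\mathcal{L}_0+\sum_{j=1}^ma_j\mathcal{L}_j$ on $\mathcal{H}_0(\mathbb{D})$, where $a_1,\dots,a_m$ are complex numbers which do not depend on $g$.
   Context: $\mathbb{D}$ is the open unit disc, $\mathcal{H}(\mathbb{D})$ the analytic functions on $\mathbb{D}$, $\mathcal{H}_0(\mathbb{D})=\{f\in\mathcal{H}(\mathbb{D}):f(0)=0\}$, $\mathbb{N}_0=\mathbb{N}\cup\{0\}$. For $g\in\mathcal{H}(\mathbb{D})$: $M_gf=fg$, $S_gf(z)=\int_0^zf'(\zeta)g(\zeta)d\zeta$, $T_gf(z)=\int_0^zf(\zeta)g'(\zeta)d\zeta$. A $g$-operator is a finite linear combination (constant coefficients) of finite compositions of $M_g,S_g,T_g$ (the identity counts as the empty composition). For $a,b\in\mathbb{N}_0$, $W_g(a,b)$ is the set of compositions $L_1\cdots L_{a+b}$ with each $L_j\in\{S_g,T_g\}$, exactly $a$ of them equal to $S_g$ and $b$ equal to $T_g$ (so $W_g(0,0)=\{I\}$); $\operatorname{span}$ denotes the complex linear span. "$=$ on $\mathcal{H}_0(\mathbb{D})$"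 means equality of restrictions to $\mathcal{H}_0(\mathbb{D})$. *)

theory Defs
  imports "HOL-Complex_Analysis.Complex_Analysis"
begin

datatype gop = Mop | Sop | Top

definition Mg :: "(complex \<Rightarrow> complex) \<Rightarrow> (complex \<Rightarrow> complex) \<Rightarrow> complex \<Rightarrow> complex" where
  "Mg g f = (\<lambda>z. f z * g z)"

definition Sg :: "(complex \<Rightarrow> complex) \<Rightarrow> (complex \<Rightarrow> complex) \<Rightarrow> complex \<Rightarrow> complex" where
  "Sg g f = (\<lambda>z. contour_integral (linepath 0 z) (\<lambda>\<zeta>. deriv f \<zeta> * g \<zeta>))"

definition Tg :: "(complex \<Rightarrow> complex) \<Rightarrow> (complex \<Rightarrow> complex) \<Rightarrow> complex \<Rightarrow> complex" where
  "Tg g f = (\<lambda>z. contour_integral (linepath 0 z) (\<lambda>\<zeta>. f \<zeta> * deriv g \<zeta>))"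

fun op_eval :: "gop \<Rightarrow> (complex \<Rightarrow> complex) \<Rightarrow> (complex \<Rightarrow> complex) \<Rightarrow> complex \<Rightarrow> complex" where
  "op_eval Mop g = Mg g"
| "op_eval Sop g = Sg g"
| "op_eval Top g = Tg g"

text \<open>A word [L1,...,Lk] denotes the composition L1 \<circ> ... \<circ> Lk; the empty word is the identity.\<close>
definition word_eval :: "gop list \<Rightarrow> (complex \<Rightarrow> complex) \<Rightarrow> (complex \<Rightarrow> complex) \<Rightarrow> complex \<Rightarrow> complex" where
  "word_eval w g = foldr (\<lambda>L acc. op_eval L g \<circ> acc) w id"

text \<open>A g-operator: finite linear combination (constant coefficients) of words.\<close>
definition gop_eval :: "(complex \<times> gop list) list \<Rightarrow> (complex \<Rightarrow> complex) \<Rightarrow> (complex \<Rightarrow> complex) \<Rightarrow> complex \<Rightarrow> complex" where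
  "gop_eval L g f = (\<lambda>z. (\<Sum>(c, w) \<leftarrow> L. c * word_eval w g f z))"

definition inW :: "gop list \<Rightarrow> nat \<Rightarrow> nat \<Rightarrow> bool" where
  "inW w a b \<longleftrightarrow> set w \<subseteq> {Sop, Top} \<and> length (filter ((=) Sop) w) = a \<and> length (filter ((=) Top) w) = b"

text \<open>An element of span W_g(a,b) with coefficient function c (a finite sum, as W(a,b) is finite).\<close>
definition span_eval :: "(gop list \<Rightarrow> complex) \<Rightarrow> nat \<Rightarrow> nat \<Rightarrow> (complex \<Rightarrow> complex) \<Rightarrow> (complex \<Rightarrow> complex) \<Rightarrow> complex \<Rightarrow> complex" where
  "span_eval c a b g f = (\<lambda>z. (\<Sum>w\<in>{w. inW w a b}. c w * word_eval w g f z))"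

definition eq_on_H0 :: "((complex \<Rightarrow> complex) \<Rightarrow> complex \<Rightarrow> complex) \<Rightarrow> ((complex \<Rightarrow> complex) \<Rightarrow> complex \<Rightarrow> complex) \<Rightarrow> bool" where
  "eq_on_H0 A B \<longleftrightarrow> (\<forall>f. f holomorphic_on ball 0 1 \<and> f 0 = 0 \<longrightarrow> (\<forall>z\<in>ball 0 1. A f z = B f z))"

end

theory Submission
  imports Defs
begin

text \<open>On \<open>H\<^sub>0(\<bbbD>)\<close> one has \<open>S\<^sub>g + T\<^sub>g = M\<^sub>g\<close>; differentiating shows
  \<open>T\<^sub>g S\<^sub>g = S\<^sub>g T\<^sub>g - T\<^sub>g T\<^sub>g\<close> there. So moving a \<open>T\<^sub>g\<close> to the right of an \<open>S\<^sub>g\<close>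
  changes a word of \<open>W\<^sub>g(a,b)\<close> only by a word of \<open>W\<^sub>g(a-1,b+1)\<close>, and every word of
  \<open>W\<^sub>g(a,b)\<close> equals \<open>S\<^sub>g\<^sup>a T\<^sub>g\<^sup>b\<close> modulo \<open>span W\<^sub>g(a-1,b+1)\<close>. By downward induction on \<open>j\<close>,
  starting from \<open>W\<^sub>g(0,n+m) = {T\<^sub>g\<^sup>n\<^sup>+\<^sup>m}\<close>, every word of \<open>W\<^sub>g(m-j,n+j)\<close> equals \<open>\<L>\<^sub>j\<close>
  modulo \<open>span {\<L>\<^sub>j\<^sub>+\<^sub>1, \<dots>, \<L>\<^sub>m}\<close>. The rewriting uses only these identities, never
  the particular \<open>g\<close>, so the resulting coefficients are independent of \<open>g\<close>.\<close>

abbreviation disc :: "complex set" where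
  "disc \<equiv> ball 0 1"

lemma has_field_derivative_linepath_integral:
  fixes h :: "complex \<Rightarrow> complex"
  assumes h: "h holomorphic_on S" and S: "open S" "convex S" "a \<in> S" and z: "z \<in> S"
  shows "((\<lambda>z. contour_integral (linepath a z) h) has_field_derivative h z) (at z)"
proof -
  have "((\<lambda>z. contour_integral (linepath a z) h) has_field_derivative h z) (at z within S)"
  proof (rule triangle_contour_integrals_convex_primitive[OF holomorphic_on_imp_continuous_on[OF h] S(3,2) z])
    fix b c assume "b \<in> S" "c \<in> S"
    then have "(h has_contour_integral 0) (linepath a b +++ linepath b c +++ linepath c a)"
      using S by (intro Cauchy_theorem_convex_simple[OF h S(2)])
        (auto simp: path_image_join closed_segment_subset)
    then show "contour_integral (linepath a b) h + contour_integral (linepath b c) h +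
        contour_integral (linepath c a) h = 0"
      by (rule has_chain_integral_chain_integral3)
  qed
  then show ?thesis
    using at_within_open[OF z S(1)] by simp
qed

lemma eq_if_same_field_derivative:
  fixes F G :: "'a::{real_normed_field,euclidean_space} \<Rightarrow> 'a"
  assumes S: "open S" "connected S"
    and F: "\<And>z. z \<in> S \<Longrightarrow> (F has_field_derivative D z) (at z)"
    and G: "\<And>z. z \<in> S \<Longrightarrow> (G has_field_derivative D z) (at z)"
    and a: "a \<in> S" "F a = G a" and z: "z \<in> S"
  shows "F z = G z"
proof -
  have "(\<lambda>z. F z - G z) constant_on S"
  proof (rule has_field_derivative_0_imp_constant_on[OF _ S(2,1)])
    fix y assume "y \<in> S"
    then show "((\<lambda>z. F z - G z) has_field_derivative 0) (at y)"
      using DERIV_diff[OF F[of y] G[of y]] by simp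
  qed
  then obtain k where "\<forall>x\<in>S. F x - G x = k"
    unfolding constant_on_def by blast
  then have "F z - G z = F a - G a"
    using a(1) z by simp
  then show ?thesis
    using a(2) by simp
qed

lemma disc_eq_if_same_field_derivative:
  assumes "\<And>z. z \<in> disc \<Longrightarrow> (F has_field_derivative D z) (at z)"
    and "\<And>z. z \<in> disc \<Longrightarrow> (G has_field_derivative D z) (at z)"
    and "F 0 = G 0" and "z \<in> disc"
  shows "F z = G z"
  using eq_if_same_field_derivative[of disc F D G 0 z] assms by simp

lemma Sg_has_field_derivative:
  assumes "g holomorphic_on disc" "f holomorphic_on disc" "z \<in> disc"
  shows "(Sg g f has_field_derivative deriv f z * g z) (at z)"
  unfolding Sg_def using assms
  by (intro has_field_derivative_linepath_integral holomorphic_intros holomorphic_deriv) auto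

lemma Tg_has_field_derivative:
  assumes "g holomorphic_on disc" "f holomorphic_on disc" "z \<in> disc"
  shows "(Tg g f has_field_derivative f z * deriv g z) (at z)"
  unfolding Tg_def using assms
  by (intro has_field_derivative_linepath_integral holomorphic_intros holomorphic_deriv) auto

lemma Sg_at_0 [simp]: "Sg g f 0 = 0"
  by (simp add: Sg_def)

lemma Tg_at_0 [simp]: "Tg g f 0 = 0"
  by (simp add: Tg_def)

lemma holomorphic_on_Sg:
  "g holomorphic_on disc \<Longrightarrow> f holomorphic_on disc \<Longrightarrow> Sg g f holomorphic_on disc"
  using Sg_has_field_derivative holomorphic_on_open[OF open_ball] by blast

lemma holomorphic_on_Tg:
  "g holomorphic_on disc \<Longrightarrow> f holomorphic_on disc \<Longrightarrow> Tg g f holomorphic_on disc"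
  using Tg_has_field_derivative holomorphic_on_open[OF open_ball] by blast

lemma path_image_linepath_0_subset_disc: "z \<in> disc \<Longrightarrow> path_image (linepath 0 z) \<subseteq> disc"
  by (simp add: closed_segment_subset)

lemma Sg_cong:
  assumes "\<And>z. z \<in> disc \<Longrightarrow> f z = h z" and z: "z \<in> disc"
  shows "Sg g f z = Sg g h z"
  unfolding Sg_def
proof (rule contour_integral_eq)
  fix x assume "x \<in> path_image (linepath 0 z)"
  then have "x \<in> disc"
    using path_image_linepath_0_subset_disc[OF z] by blast
  then have "\<forall>\<^sub>F y in nhds x. y \<in> disc"
    by (rule eventually_nhds_in_open[OF open_ball])
  then have "\<forall>\<^sub>F y in nhds x. f y = h y"
    by (rule eventually_mono) (rule assms(1))
  then show "deriv f x * g x = deriv h x * g x"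
    using deriv_cong_ev by metis
qed

lemma Tg_cong:
  assumes "\<And>z. z \<in> disc \<Longrightarrow> f z = h z" and z: "z \<in> disc"
  shows "Tg g f z = Tg g h z"
  unfolding Tg_def
proof (rule contour_integral_eq)
  fix x assume "x \<in> path_image (linepath 0 z)"
  then have "x \<in> disc"
    using path_image_linepath_0_subset_disc[OF z] by blast
  then show "f x * deriv g x = h x * deriv g x"
    using assms(1) by simp
qed

lemma Sg_linear:
  assumes g: "g holomorphic_on disc" and f: "f holomorphic_on disc" and h: "h holomorphic_on disc"
    and z: "z \<in> disc"
  shows "Sg g (\<lambda>z. c * f z + h z) z = c * Sg g f z + Sg g h z"
proof (rule disc_eq_if_same_field_derivative[OF _ _ _ z])
  fix y assume y: "y \<in> disc"
  have "deriv (\<lambda>z. c * f z + h z) y = c * deriv f y + deriv h y"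
    by (intro DERIV_imp_deriv DERIV_add DERIV_cmult holomorphic_derivI[OF f open_ball y] holomorphic_derivI[OF h open_ball y])
  then show "(Sg g (\<lambda>z. c * f z + h z) has_field_derivative (c * deriv f y + deriv h y) * g y) (at y)"
    using Sg_has_field_derivative[of g "\<lambda>z. c * f z + h z" y] g f h y
    by (simp add: holomorphic_intros)
  show "((\<lambda>z. c * Sg g f z + Sg g h z) has_field_derivative (c * deriv f y + deriv h y) * g y) (at y)"
    using DERIV_add[OF DERIV_cmult[OF Sg_has_field_derivative[OF g f y]] Sg_has_field_derivative[OF g h y]]
    by (simp add: algebra_simps)
qed simp

lemma Tg_linear:
  assumes g: "g holomorphic_on disc" and f: "f holomorphic_on disc" and h: "h holomorphic_on disc"
    and z: "z \<in> disc"
  shows "Tg g (\<lambda>z. c * f z + h z) z = c * Tg g f z + Tg g h z"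
proof (rule disc_eq_if_same_field_derivative[OF _ _ _ z])
  fix y assume y: "y \<in> disc"
  show "(Tg g (\<lambda>z. c * f z + h z) has_field_derivative (c * f y + h y) * deriv g y) (at y)"
    using Tg_has_field_derivative[of g "\<lambda>z. c * f z + h z" y] g f h y
    by (simp add: holomorphic_intros)
  show "((\<lambda>z. c * Tg g f z + Tg g h z) has_field_derivative (c * f y + h y) * deriv g y) (at y)"
    using DERIV_add[OF DERIV_cmult[OF Tg_has_field_derivative[OF g f y]] Tg_has_field_derivative[OF g h y]]
    by (simp add: algebra_simps)
qed simp

lemma Sg_diff:
  assumes "g holomorphic_on disc" "f holomorphic_on disc" "h holomorphic_on disc" "z \<in> disc"
  shows "Sg g (\<lambda>z. f z - h z) z = Sg g f z - Sg g h z"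
  using Sg_linear[OF assms(1,3,2,4), of "-1"] by simp

lemma Tg_diff:
  assumes "g holomorphic_on disc" "f holomorphic_on disc" "h holomorphic_on disc" "z \<in> disc"
  shows "Tg g (\<lambda>z. f z - h z) z = Tg g f z - Tg g h z"
  using Tg_linear[OF assms(1,3,2,4), of "-1"] by simp

lemma Sg_plus_Tg:
  assumes g: "g holomorphic_on disc" and f: "f holomorphic_on disc" and "f 0 = 0" and z: "z \<in> disc"
  shows "Sg g f z + Tg g f z = f z * g z"
proof (rule disc_eq_if_same_field_derivative[OF _ _ _ z])
  fix y assume y: "y \<in> disc"
  show "((\<lambda>z. Sg g f z + Tg g f z) has_field_derivative deriv f y * g y + f y * deriv g y) (at y)"
    by (intro DERIV_add Sg_has_field_derivative Tg_has_field_derivative g f y)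
  show "((\<lambda>z. f z * g z) has_field_derivative deriv f y * g y + f y * deriv g y) (at y)"
    using DERIV_mult[OF holomorphic_derivI[OF f open_ball y] holomorphic_derivI[OF g open_ball y]]
    by (simp add: algebra_simps)
qed (simp add: \<open>f 0 = 0\<close>)

text \<open>Both sides vanish at \<open>0\<close> and, as \<open>S\<^sub>g + T\<^sub>g = M\<^sub>g\<close> on \<open>H\<^sub>0\<close>, have derivative \<open>S\<^sub>g f \<cdot> g\<acute>\<close>.\<close>
lemma Tg_Sg_commute:
  assumes g: "g holomorphic_on disc" and f: "f holomorphic_on disc" and "f 0 = 0" and z: "z \<in> disc"
  shows "Tg g (Sg g f) z = Sg g (Tg g f) z - Tg g (Tg g f) z"
proof (rule disc_eq_if_same_field_derivative[OF _ _ _ z])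
  fix y assume y: "y \<in> disc"
  have Tf: "Tg g f holomorphic_on disc"
    using holomorphic_on_Tg[OF g f] .
  show "(Tg g (Sg g f) has_field_derivative Sg g f y * deriv g y) (at y)"
    using Tg_has_field_derivative[OF g holomorphic_on_Sg[OF g f] y] .
  have dTf: "deriv (Tg g f) y = f y * deriv g y"
    by (rule DERIV_imp_deriv[OF Tg_has_field_derivative[OF g f y]])
  have Sf: "Sg g f y = f y * g y - Tg g f y"
    using Sg_plus_Tg[OF g f \<open>f 0 = 0\<close> y] by (simp add: eq_diff_eq)
  have "deriv (Tg g f) y * g y - Tg g f y * deriv g y = Sg g f y * deriv g y"
    by (simp only: dTf Sf) (simp add: algebra_simps)
  moreover have "((\<lambda>z. Sg g (Tg g f) z - Tg g (Tg g f) z) has_field_derivative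
      deriv (Tg g f) y * g y - Tg g f y * deriv g y) (at y)"
    by (intro DERIV_diff Sg_has_field_derivative Tg_has_field_derivative g Tf y)
  ultimately show "((\<lambda>z. Sg g (Tg g f) z - Tg g (Tg g f) z) has_field_derivative
      Sg g f y * deriv g y) (at y)"
    by simp
qed simp

type_synonym g_operator = "(complex \<Rightarrow> complex) \<Rightarrow> (complex \<Rightarrow> complex) \<Rightarrow> complex \<Rightarrow> complex"

definition H0_equiv :: "g_operator \<Rightarrow> g_operator \<Rightarrow> bool" where
  "H0_equiv P Q \<longleftrightarrow> (\<forall>g. g holomorphic_on disc \<longrightarrow> eq_on_H0 (P g) (Q g))"

lemma H0_equivI:
  "(\<And>g f z. g holomorphic_on disc \<Longrightarrow> f holomorphic_on disc \<Longrightarrow> f 0 = 0 \<Longrightarrow> z \<in> disc \<Longrightarrow>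
     P g f z = Q g f z) \<Longrightarrow> H0_equiv P Q"
  by (simp add: H0_equiv_def eq_on_H0_def)

lemma H0_equivD:
  "H0_equiv P Q \<Longrightarrow> g holomorphic_on disc \<Longrightarrow> f holomorphic_on disc \<Longrightarrow> f 0 = 0 \<Longrightarrow> z \<in> disc \<Longrightarrow>
     P g f z = Q g f z"
  by (simp add: H0_equiv_def eq_on_H0_def)

lemma op_eval_at_0: "f 0 = 0 \<Longrightarrow> op_eval x g f 0 = 0"
  by (cases x) (simp_all add: Mg_def)

lemma op_eval_zero [simp]: "op_eval x g (\<lambda>z. 0) = (\<lambda>z. 0)"
  by (cases x) (simp_all add: Mg_def Sg_def Tg_def)

lemma holomorphic_on_op_eval:
  "g holomorphic_on disc \<Longrightarrow> f holomorphic_on disc \<Longrightarrow> op_eval x g f holomorphic_on disc"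
  by (cases x) (simp_all add: Mg_def holomorphic_on_mult holomorphic_on_Sg holomorphic_on_Tg)

lemma op_eval_cong:
  "(\<And>z. z \<in> disc \<Longrightarrow> f z = h z) \<Longrightarrow> z \<in> disc \<Longrightarrow> op_eval x g f z = op_eval x g h z"
  by (cases x) (auto simp: Mg_def intro: Sg_cong Tg_cong)

lemma op_eval_linear:
  "g holomorphic_on disc \<Longrightarrow> f holomorphic_on disc \<Longrightarrow> h holomorphic_on disc \<Longrightarrow> z \<in> disc \<Longrightarrow>
     op_eval x g (\<lambda>z. c * f z + h z) z = c * op_eval x g f z + op_eval x g h z"
  by (cases x) (auto simp: Sg_linear Tg_linear Mg_def distrib_right mult.assoc)

lemma word_eval_Nil [simp]: "word_eval [] g f = f"
  by (simp add: word_eval_def)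

lemma word_eval_Cons [simp]: "word_eval (x # w) g f = op_eval x g (word_eval w g f)"
  by (simp add: word_eval_def)

lemma word_eval_append [simp]: "word_eval (u @ v) g f = word_eval u g (word_eval v g f)"
  by (induction u) auto

lemma holomorphic_on_word_eval:
  "g holomorphic_on disc \<Longrightarrow> f holomorphic_on disc \<Longrightarrow> word_eval w g f holomorphic_on disc"
  by (induction w) (simp_all add: holomorphic_on_op_eval)

lemma word_eval_at_0: "f 0 = 0 \<Longrightarrow> word_eval w g f 0 = 0"
  by (induction w) (simp_all add: op_eval_at_0)

text \<open>The last rule makes this the span of the words in \<open>W\<close> modulo equality on \<open>H\<^sub>0(\<bbbD>)\<close>.\<close>
inductive word_span :: "gop list set \<Rightarrow> g_operator \<Rightarrow> bool" for W where
  zero: "word_span W (\<lambda>g f z. 0)"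
| word: "w \<in> W \<Longrightarrow> word_span W (word_eval w)"
| lincomb: "word_span W P \<Longrightarrow> word_span W Q \<Longrightarrow> word_span W (\<lambda>g f z. c * P g f z + Q g f z)"
| H0_equiv: "word_span W Q \<Longrightarrow> H0_equiv P Q \<Longrightarrow> word_span W P"

lemma word_span_H0_equivI:
  "word_span W Q \<Longrightarrow> (\<And>g f z. g holomorphic_on disc \<Longrightarrow> f holomorphic_on disc \<Longrightarrow> f 0 = 0 \<Longrightarrow>
     z \<in> disc \<Longrightarrow> P g f z = Q g f z) \<Longrightarrow> word_span W P"
  by (rule word_span.H0_equiv) (auto intro: H0_equivI)

lemma word_span_add:
  "word_span W P \<Longrightarrow> word_span W Q \<Longrightarrow> word_span W (\<lambda>g f z. P g f z + Q g f z)"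
  using word_span.lincomb[of W P Q 1] by simp

lemma word_span_scale:
  "word_span W P \<Longrightarrow> word_span W (\<lambda>g f z. c * P g f z)"
  using word_span.lincomb[OF _ word_span.zero, of W P c] by simp

lemma word_span_diff:
  "word_span W P \<Longrightarrow> word_span W Q \<Longrightarrow> word_span W (\<lambda>g f z. P g f z - Q g f z)"
  using word_span.lincomb[of W Q P "-1"] by simp

lemma word_span_sum:
  "finite A \<Longrightarrow> (\<And>i. i \<in> A \<Longrightarrow> word_span W (P i)) \<Longrightarrow> word_span W (\<lambda>g f z. \<Sum>i\<in>A. P i g f z)"
  by (induction A rule: finite_induct) (simp_all add: word_span.zero word_span_add)

lemma word_span_trans:
  assumes "word_span W P" and "\<And>w. w \<in> W \<Longrightarrow> word_span W' (word_eval w)"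
  shows "word_span W' P"
  using assms(1)
proof (induction rule: word_span.induct)
  case zero
  show ?case by (rule word_span.zero)
next
  case (word w)
  then show ?case by (rule assms(2))
next
  case (lincomb P Q c)
  from lincomb.IH show ?case
    by (rule word_span.lincomb)
next
  case (H0_equiv Q P)
  from H0_equiv.IH H0_equiv.hyps(2) show ?case
    by (rule word_span.H0_equiv)
qed

lemma word_span_mono: "word_span W P \<Longrightarrow> W \<subseteq> W' \<Longrightarrow> word_span W' P"
  by (erule word_span_trans) (auto intro: word_span.word)

lemma holomorphic_on_word_span:
  assumes "word_span W P" "g holomorphic_on disc" "f holomorphic_on disc" "f 0 = 0"
  shows "P g f holomorphic_on disc"
  using assms(1)
proof (induction rule: word_span.induct)
  case zero
  show ?case
    by simp
next
  case (word w)
  show ?case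
    using assms(2,3) by (rule holomorphic_on_word_eval)
next
  case (lincomb P Q c)
  then show ?case
    by (intro holomorphic_intros)
next
  case (H0_equiv Q P)
  then show ?case
    using H0_equivD[OF H0_equiv.hyps(2) assms(2-4)] holomorphic_transform[of "Q g f" disc "P g f"]
    by auto
qed

lemma word_span_op_eval:
  assumes "word_span W P"
  shows "word_span ((#) x ` W) (\<lambda>g f. op_eval x g (P g f))"
  using assms
proof (induction rule: word_span.induct)
  case zero
  then show ?case
    by (simp add: word_span.zero)
next
  case (word w)
  then have "word_span ((#) x ` W) (word_eval (x # w))"
    by (intro word_span.word) blast
  moreover have "word_eval (x # w) = (\<lambda>g f. op_eval x g (word_eval w g f))"
    by (intro ext) simp
  ultimately show ?case
    by simp
next
  case (lincomb P Q c)
  show ?case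
  proof (rule word_span_H0_equivI[OF word_span.lincomb[OF lincomb.IH, of c]])
    fix g f z assume "g holomorphic_on disc" "f holomorphic_on disc" "f 0 = 0" "z \<in> disc"
    then show "op_eval x g (\<lambda>z. c * P g f z + Q g f z) z = c * op_eval x g (P g f) z + op_eval x g (Q g f) z"
      using holomorphic_on_word_span[OF lincomb.hyps(1)] holomorphic_on_word_span[OF lincomb.hyps(2)]
      by (intro op_eval_linear) auto
  qed
next
  case (H0_equiv Q P)
  show ?case
  proof (rule word_span_H0_equivI[OF H0_equiv.IH])
    fix g f z assume "g holomorphic_on disc" "f holomorphic_on disc" "f 0 = 0" "z \<in> disc"
    then show "op_eval x g (P g f) z = op_eval x g (Q g f) z"
      using H0_equivD[OF H0_equiv.hyps(2)] by (intro op_eval_cong) auto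
  qed
qed


lemma word_span_if_diff:
  "word_span V (\<lambda>g f z. P g f z - word_eval v g f z) \<Longrightarrow> v \<in> V \<Longrightarrow> word_span V P"
  by (rule word_span_H0_equivI[OF word_span_add[OF _ word_span.word]]) auto

lemma word_span_imp_lincomb:
  assumes "word_span (L ` J) P" and "finite J"
  shows "\<exists>a. H0_equiv P (\<lambda>g f z. \<Sum>j\<in>J. a j * word_eval (L j) g f z)"
  using assms(1)
proof (induction rule: word_span.induct)
  case zero
  show ?case
    by (rule exI[of _ "\<lambda>j. 0"]) (simp add: H0_equivI)
next
  case (word w)
  then obtain i where i: "i \<in> J" "w = L i"
    by blast
  have "H0_equiv (word_eval w) (\<lambda>g f z. \<Sum>j\<in>J. (if j = i then 1 else 0) * word_eval (L j) g f z)"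
    using i assms(2) by (intro H0_equivI) (simp add: if_distrib[of "\<lambda>x. x * _"] cong: if_cong)
  then show ?case
    by (rule exI[of _ "\<lambda>j. if j = i then 1 else 0"])
next
  case (lincomb P Q c)
  then obtain a b where
    a: "H0_equiv P (\<lambda>g f z. \<Sum>j\<in>J. a j * word_eval (L j) g f z)" and
    b: "H0_equiv Q (\<lambda>g f z. \<Sum>j\<in>J. b j * word_eval (L j) g f z)"
    by blast
  have "H0_equiv (\<lambda>g f z. c * P g f z + Q g f z)
      (\<lambda>g f z. \<Sum>j\<in>J. (c * a j + b j) * word_eval (L j) g f z)"
    using H0_equivD[OF a] H0_equivD[OF b]
    by (intro H0_equivI) (simp add: distrib_right sum.distrib sum_distrib_left mult.assoc)
  then show ?case
    by (rule exI[of _ "\<lambda>j. c * a j + b j"])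
next
  case (H0_equiv Q P)
  then obtain a where a: "H0_equiv Q (\<lambda>g f z. \<Sum>j\<in>J. a j * word_eval (L j) g f z)"
    by blast
  then have "H0_equiv P (\<lambda>g f z. \<Sum>j\<in>J. a j * word_eval (L j) g f z)"
    using H0_equivD[OF H0_equiv.hyps(2)] H0_equivD[OF a] by (intro H0_equivI) simp
  then show ?case
    by blast
qed

abbreviation Wset :: "nat \<Rightarrow> nat \<Rightarrow> gop list set" where
  "Wset a b \<equiv> {w. inW w a b}"

lemma inW_Nil [simp]: "inW [] a b \<longleftrightarrow> a = 0 \<and> b = 0"
  by (auto simp: inW_def)

lemma inW_Cons_Mop [simp]: "\<not> inW (Mop # w) a b"
  by (simp add: inW_def)

lemma inW_Cons_Sop [simp]:
  "inW (Sop # w) (Suc a) b \<longleftrightarrow> inW w a b"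
  "\<not> inW (Sop # w) 0 b"
  by (auto simp: inW_def)

lemma inW_Cons_Top [simp]:
  "inW (Top # w) a (Suc b) \<longleftrightarrow> inW w a b"
  "\<not> inW (Top # w) a 0"
  by (auto simp: inW_def)

lemma inW_0_iff: "inW w 0 b \<longleftrightarrow> w = replicate b Top"
proof (induction w arbitrary: b)
  case (Cons x w)
  then show ?case
    by (cases x; cases b) auto
qed auto

lemma inW_replicate_Sop_append [simp]: "inW (replicate k Sop @ u) (k + a) b \<longleftrightarrow> inW u a b"
  by (induction k) auto

lemma finite_Wset: "finite (Wset a b)"
proof (rule finite_subset)
  have "length w = length (filter ((=) Sop) w) + length (filter ((=) Top) w)"
    if "set w \<subseteq> {Sop, Top}" for w :: "gop list"
    using that by (induction w) auto
  then show "Wset a b \<subseteq> {w. set w \<subseteq> {Sop, Top} \<and> length w = a + b}"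
    by (auto simp: inW_def)
qed (simp add: finite_lists_length_eq)

lemma span_eval_in_word_span: "word_span (Wset a b) (span_eval c a b)"
proof -
  have "word_span (Wset a b) (\<lambda>g f z. \<Sum>w\<in>Wset a b. c w * word_eval w g f z)"
    by (intro word_span_sum finite_Wset word_span_scale word_span.word) simp
  moreover have "span_eval c a b = (\<lambda>g f z. \<Sum>w\<in>Wset a b. c w * word_eval w g f z)"
    by (intro ext) (simp add: span_eval_def)
  ultimately show ?thesis
    by simp
qed

lemma word_span_Sg:
  "word_span (Wset a b) P \<Longrightarrow> word_span (Wset (Suc a) b) (\<lambda>g f. Sg g (P g f))"
  using word_span_op_eval[of "Wset a b" P Sop] by (auto elim: word_span_mono)

lemma word_span_Tg:
  "word_span (Wset a b) P \<Longrightarrow> word_span (Wset a (Suc b)) (\<lambda>g f. Tg g (P g f))"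
  using word_span_op_eval[of "Wset a b" P Top] by (auto elim: word_span_mono)

lemmas Sg_Tg_H0_simps = Tg_Sg_commute Sg_diff Tg_diff holomorphic_on_Sg holomorphic_on_Tg
  holomorphic_on_word_eval word_eval_at_0

lemma word_span_Top_Sop_power_commute:
  assumes u: "inW u p q"
  shows "word_span (Wset (a + p) (Suc (Suc q))) (\<lambda>g f z.
    word_eval (Top # replicate (Suc a) Sop @ u) g f z - word_eval (replicate (Suc a) Sop @ Top # u) g f z)"
proof (induction a)
  case 0
  have "word_span (Wset (0 + p) (Suc (Suc q))) (\<lambda>g f z. -1 * word_eval (Top # Top # u) g f z)"
    using u by (intro word_span_scale word_span.word) simp
  then show ?case
    by (rule word_span_H0_equivI) (simp add: Sg_Tg_H0_simps)
next
  case (Suc a)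
  let ?v = "replicate (Suc a) Sop @ u"
  have "inW (Top # Top # ?v) (Suc (a + p)) (Suc (Suc q))"
    using u by simp
  then have "word_span (Wset (Suc (a + p)) (Suc (Suc q))) (\<lambda>g f z.
      -1 * word_eval (Top # Top # ?v) g f z +
      Sg g (\<lambda>z. word_eval (Top # ?v) g f z - word_eval (replicate (Suc a) Sop @ Top # u) g f z) z)"
    by (intro word_span.lincomb word_span.word word_span_Sg[OF Suc.IH]) simp
  then show ?case
    unfolding add_Suc by (rule word_span_H0_equivI) (simp add: Sg_Tg_H0_simps)
qed

lemma word_minus_sorted_in_word_span:
  "inW w (Suc a) b \<Longrightarrow> word_span (Wset a (Suc b))
     (\<lambda>g f z. word_eval w g f z - word_eval (replicate (Suc a) Sop @ replicate b Top) g f z)"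
proof (induction w arbitrary: a b)
  case Nil
  then show ?case
    by simp
next
  case (Cons x w)
  show ?case
  proof (cases x)
    case Mop
    then show ?thesis
      using Cons.prems by simp
  next
    case Sop
    show ?thesis
    proof (cases a)
      case 0
      then have "w = replicate b Top"
        using Cons.prems Sop by (simp add: inW_0_iff)
      then show ?thesis
        using Sop 0 by (intro word_span_H0_equivI[OF word_span.zero]) simp
    next
      case (Suc a')
      have "word_span (Wset (Suc a') (Suc b)) (\<lambda>g f. Sg g (\<lambda>z.
          word_eval w g f z - word_eval (replicate (Suc a') Sop @ replicate b Top) g f z))"
        using Cons Sop Suc by (intro word_span_Sg) simp
      then show ?thesis
        unfolding Suc by (rule word_span_H0_equivI) (use Sop in \<open>simp add: Sg_Tg_H0_simps\<close>)
    qed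
  next
    case Top
    then obtain b' where b: "b = Suc b'"
      using Cons.prems by (cases b) auto
    let ?R = "replicate (Suc a) Sop @ replicate b' Top"
    have "word_span (Wset a (Suc b)) (\<lambda>g f z.
        Tg g (\<lambda>z. word_eval w g f z - word_eval ?R g f z) z +
        (word_eval (Top # ?R) g f z - word_eval (replicate (Suc a) Sop @ Top # replicate b' Top) g f z))"
      using Cons Top b word_span_Top_Sop_power_commute[of "replicate b' Top" 0 b' a]
      by (intro word_span_add word_span_Tg) (simp_all add: inW_0_iff)
    then show ?thesis
      by (rule word_span_H0_equivI) (use Top b in \<open>simp add: Sg_Tg_H0_simps\<close>)
  qed
qed

lemma word_minus_LL_in_span:
  assumes LL: "\<forall>j\<le>m. inW (LL j) (m - j) (n + j)" and "j \<le> m"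
  shows "\<forall>w\<in>Wset (m - j) (n + j).
    word_span (LL ` {Suc j..m}) (\<lambda>g f z. word_eval w g f z - word_eval (LL j) g f z)"
  using \<open>j \<le> m\<close>
proof (induction j rule: inc_induct)
  case base
  have "w = LL m" if "inW w 0 (n + m)" for w
    using that LL[rule_format, of m] by (simp add: inW_0_iff)
  then show ?case
    by (auto intro: word_span_H0_equivI[OF word_span.zero])
next
  case (step i)
  obtain k where k: "m - i = Suc k" "m - Suc i = k"
    using step.hyps by (metis Suc_diff_Suc)
  have words_in_span: "word_span (LL ` {Suc i..m}) (word_eval v)" if "inW v k (Suc (n + i))" for v
  proof (rule word_span_if_diff)
    have "word_span (LL ` {Suc (Suc i)..m}) (\<lambda>g f z. word_eval v g f z - word_eval (LL (Suc i)) g f z)"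
      using step.IH that k(2) by simp
    then show "word_span (LL ` {Suc i..m}) (\<lambda>g f z. word_eval v g f z - word_eval (LL (Suc i)) g f z)"
      by (rule word_span_mono) auto
    show "LL (Suc i) \<in> LL ` {Suc i..m}"
      using step.hyps by simp
  qed
  have sorted: "word_span (LL ` {Suc i..m})
      (\<lambda>g f z. word_eval w g f z - word_eval (replicate (Suc k) Sop @ replicate (n + i) Top) g f z)"
    if "inW w (Suc k) (n + i)" for w
    using word_span_trans[OF word_minus_sorted_in_word_span[OF that] words_in_span] by simp
  show ?case
  proof
    fix w assume "w \<in> Wset (m - i) (n + i)"
    then have "inW w (Suc k) (n + i)" "inW (LL i) (Suc k) (n + i)"
      using LL[rule_format, of i] step.hyps k(1) by auto
    from word_span_diff[OF sorted[OF this(1)] sorted[OF this(2)]]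
    show "word_span (LL ` {Suc i..m}) (\<lambda>g f z. word_eval w g f z - word_eval (LL i) g f z)"
      by (rule word_span_H0_equivI) simp
  qed
qed

lemma word_in_span_LL:
  assumes LL: "\<forall>j\<le>m. inW (LL j) (m - j) (n + j)" and "j \<le> m" and "inW w (m - j) (n + j)"
  shows "word_span (LL ` {j..m}) (word_eval w)"
proof (rule word_span_if_diff)
  have "word_span (LL ` {Suc j..m}) (\<lambda>g f z. word_eval w g f z - word_eval (LL j) g f z)"
    using word_minus_LL_in_span[OF assms(1,2)] assms(3) by blast
  then show "word_span (LL ` {j..m}) (\<lambda>g f z. word_eval w g f z - word_eval (LL j) g f z)"
    by (rule word_span_mono) auto
qed (use assms(2) in simp)

lemma remainder_in_span_LL:
  assumes LL: "\<forall>j\<le>m. inW (LL j) (m - j) (n + j)" and "inW L0 m n"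
  shows "word_span (LL ` {1..m}) (\<lambda>g f z. (word_eval L0 g f z - word_eval (LL 0) g f z) +
    (\<Sum>j=1..m. span_eval (c j) (m - j) (n + j) g f z))"
proof (intro word_span_add word_span_sum)
  show "word_span (LL ` {1..m}) (\<lambda>g f z. word_eval L0 g f z - word_eval (LL 0) g f z)"
    using word_minus_LL_in_span[OF LL, of 0] assms(2) by simp
  fix j assume j: "j \<in> {1..m}"
  have "word_span (LL ` {j..m}) (span_eval (c j) (m - j) (n + j))"
    using word_span_trans[OF span_eval_in_word_span word_in_span_LL[OF LL]] j by auto
  then show "word_span (LL ` {1..m}) (span_eval (c j) (m - j) (n + j))"
    by (rule word_span_mono) (use j in auto)
qed simp

theorem proposition2p1:
  fixes m n :: nat
    and LL :: "nat \<Rightarrow> gop list"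
    and Lg :: "(complex \<times> gop list) list"
    and L0 :: "gop list"
    and c :: "nat \<Rightarrow> gop list \<Rightarrow> complex"
  assumes "\<forall>j\<le>m. inW (LL j) (m - j) (n + j)"
    and "inW L0 m n"
    and "\<forall>g. g holomorphic_on ball 0 1 \<longrightarrow>
           eq_on_H0 (gop_eval Lg g)
             (\<lambda>f z. word_eval L0 g f z + (\<Sum>j=1..m. span_eval (c j) (m - j) (n + j) g f z))"
  shows "\<exists>a :: nat \<Rightarrow> complex. \<forall>g. g holomorphic_on ball 0 1 \<longrightarrow>
           eq_on_H0 (gop_eval Lg g)
             (\<lambda>f z. word_eval (LL 0) g f z + (\<Sum>j=1..m. a j * word_eval (LL j) g f z))"
proof -
  obtain a where a: "H0_equiv
      (\<lambda>g f z. (word_eval L0 g f z - word_eval (LL 0) g f z) +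
        (\<Sum>j=1..m. span_eval (c j) (m - j) (n + j) g f z))
      (\<lambda>g f z. \<Sum>j=1..m. a j * word_eval (LL j) g f z)"
    using word_span_imp_lincomb[OF remainder_in_span_LL[OF assms(1,2)]] by blast
  have "H0_equiv (gop_eval Lg)
      (\<lambda>g f z. word_eval (LL 0) g f z + (\<Sum>j=1..m. a j * word_eval (LL j) g f z))"
  proof (rule H0_equivI)
    fix g f z assume h: "g holomorphic_on disc" "f holomorphic_on disc" "f 0 = 0" "z \<in> disc"
    have "gop_eval Lg g f z = word_eval L0 g f z + (\<Sum>j=1..m. span_eval (c j) (m - j) (n + j) g f z)"
      using assms(3) h unfolding eq_on_H0_def by blast
    moreover have "(\<Sum>j=1..m. a j * word_eval (LL j) g f z) = word_eval L0 g f z - word_eval (LL 0) g f z +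
        (\<Sum>j=1..m. span_eval (c j) (m - j) (n + j) g f z)"
      using H0_equivD[OF a h] by simp
    ultimately show "gop_eval Lg g f z = word_eval (LL 0) g f z + (\<Sum>j=1..m. a j * word_eval (LL j) g f z)"
      by simp
  qed
  then show ?thesis
    unfolding H0_equiv_def by blast
qed

end
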